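(* Let $\mathcal{X}=\{1,\dots,n\}$, let $\pi$ be a strictly positive probability distribution on $\mathcal{X}$, let $P$ be a $\pi$-reversible transition matrix, and fix $\alpha\in(0,1)$. For $S\subset\mathcal{X}$ with $S\neq\emptyset,\mathcal{X}$, let $G_S$ be the Gibbs kernel induced by the partition $\mathcal{X}=S\sqcup S'$ and $A_\alpha(S)=\alpha P+(1-\alpha)G_S$. Then any symmetrised Cheeger cut of $P$ maximises $S\mapsto\|A_\alpha(S)-\Pi\|_{F,\pi}^2$, and $$\max_{S\neq\mathcal{X},\emptyset}\|A_\alpha(S)-\Pi\|_{F,\pi}^2=\alpha^2\operatorname{Tr}(P^2)-2\alpha(1-\alpha)\phi^*(P)+1-2\alpha^2.$$
   Context: $S'=\mathcal{X}\setminus S$. $\pi$-reversible means $\pi(x)P(x,y)=\pi(y)P(y,x)$. The Gibbs kernel of a partition is $G(x,y)=\pi(y)/\pi(\mathcal{O}(x))$ if $y\in\mathcal{O}(x)$ and $0$ otherwise ($\mathcal{O}(x)$ the block containing $x$). $\Pi$ is the matrix with every row equal to $\pi$; $\|M\|_{F,\pi}^2=\operatorname{Tr}(M^*M)$ with $M^*(x,y)=\pi(y)M(y,x)/\pi(x)$. The symmetrised Cheeger constant is $\phi^*(P)=\min_{S:\,0<\pi(S)<1}\frac{\sum_{x\in S,y\in S'}\pi(x)P(x,y)}{\pi(S)\pi(S')}$, and a symmetrised Cheeger cut is any $S$ attaining this minimum. *)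

theory Defs
  imports Complex_Main
begin

text \<open>State space: a finite type 'x (playing the role of {1,...,n}).
  Matrices are functions 'x => 'x => real.\<close>

definition prob_pos :: "('x::finite \<Rightarrow> real) \<Rightarrow> bool" where
  "prob_pos \<pi> \<longleftrightarrow> (\<forall>x. \<pi> x > 0) \<and> (\<Sum>x\<in>UNIV. \<pi> x) = 1"

definition transition_matrix :: "('x::finite \<Rightarrow> 'x \<Rightarrow> real) \<Rightarrow> bool" where
  "transition_matrix P \<longleftrightarrow> (\<forall>x y. P x y \<ge> 0) \<and> (\<forall>x. (\<Sum>y\<in>UNIV. P x y) = 1)"

definition reversible :: "('x \<Rightarrow> real) \<Rightarrow> ('x \<Rightarrow> 'x \<Rightarrow> real) \<Rightarrow> bool" where
  "reversible \<pi> P \<longleftrightarrow> (\<forall>x y. \<pi> x * P x y = \<pi> y * P y x)"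

definition measure_of :: "('x \<Rightarrow> real) \<Rightarrow> 'x set \<Rightarrow> real" where
  "measure_of \<pi> A = (\<Sum>x\<in>A. \<pi> x)"

text \<open>Gibbs kernel of a partition, given by the block map Blk (Blk x = block containing x).\<close>
definition gibbs_kernel :: "('x \<Rightarrow> real) \<Rightarrow> ('x \<Rightarrow> 'x set) \<Rightarrow> 'x \<Rightarrow> 'x \<Rightarrow> real" where
  "gibbs_kernel \<pi> Blk x y = (if y \<in> Blk x then \<pi> y / measure_of \<pi> (Blk x) else 0)"

definition cut_blocks :: "'x set \<Rightarrow> 'x \<Rightarrow> 'x set" where
  "cut_blocks S x = (if x \<in> S then S else - S)"

definition A_alpha :: "real \<Rightarrow> ('x \<Rightarrow> real) \<Rightarrow> ('x \<Rightarrow> 'x \<Rightarrow> real) \<Rightarrow> 'x set \<Rightarrow> 'x \<Rightarrow> 'x \<Rightarrow> real" where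
  "A_alpha \<alpha> \<pi> P S x y = \<alpha> * P x y + (1 - \<alpha>) * gibbs_kernel \<pi> (cut_blocks S) x y"

definition Pi_mat :: "('x \<Rightarrow> real) \<Rightarrow> 'x \<Rightarrow> 'x \<Rightarrow> real" where
  "Pi_mat \<pi> x y = \<pi> y"

definition mat_mult :: "('x::finite \<Rightarrow> 'x \<Rightarrow> real) \<Rightarrow> ('x \<Rightarrow> 'x \<Rightarrow> real) \<Rightarrow> 'x \<Rightarrow> 'x \<Rightarrow> real" where
  "mat_mult M N x y = (\<Sum>z\<in>UNIV. M x z * N z y)"

definition mat_trace :: "('x::finite \<Rightarrow> 'x \<Rightarrow> real) \<Rightarrow> real" where
  "mat_trace M = (\<Sum>x\<in>UNIV. M x x)"

text \<open>Adjoint in L^2(\<pi>): M*(x,y) = \<pi>(y) M(y,x) / \<pi>(x).\<close>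
definition adjoint :: "('x \<Rightarrow> real) \<Rightarrow> ('x \<Rightarrow> 'x \<Rightarrow> real) \<Rightarrow> 'x \<Rightarrow> 'x \<Rightarrow> real" where
  "adjoint \<pi> M x y = \<pi> y * M y x / \<pi> x"

definition frob_sq :: "('x::finite \<Rightarrow> real) \<Rightarrow> ('x \<Rightarrow> 'x \<Rightarrow> real) \<Rightarrow> real" where
  "frob_sq \<pi> M = mat_trace (mat_mult (adjoint \<pi> M) M)"

definition cheeger_ratio :: "('x::finite \<Rightarrow> real) \<Rightarrow> ('x \<Rightarrow> 'x \<Rightarrow> real) \<Rightarrow> 'x set \<Rightarrow> real" where
  "cheeger_ratio \<pi> P S =
     (\<Sum>x\<in>S. \<Sum>y\<in>- S. \<pi> x * P x y) / (measure_of \<pi> S * measure_of \<pi> (- S))"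

definition sym_cheeger :: "('x::finite \<Rightarrow> real) \<Rightarrow> ('x \<Rightarrow> 'x \<Rightarrow> real) \<Rightarrow> real" where
  "sym_cheeger \<pi> P = Min {cheeger_ratio \<pi> P S | S. 0 < measure_of \<pi> S \<and> measure_of \<pi> S < 1}"

definition sym_cheeger_cut :: "('x::finite \<Rightarrow> real) \<Rightarrow> ('x \<Rightarrow> 'x \<Rightarrow> real) \<Rightarrow> 'x set \<Rightarrow> bool" where
  "sym_cheeger_cut \<pi> P S \<longleftrightarrow> 0 < measure_of \<pi> S \<and> measure_of \<pi> S < 1 \<and>
     cheeger_ratio \<pi> P S = sym_cheeger \<pi> P"

end

theory Submission
  imports Defs
begin

text \<open>Write \<open>\<langle>M, N\<rangle> = Tr(M\<^sup>* N)\<close>. Since \<open>A\<^sub>\<alpha>(S)\<close> is stochastic, \<open>\<langle>A\<^sub>\<alpha>(S), \<Pi>\<rangle> = \<langle>\<Pi>, \<Pi>\<rangle> = 1\<close>,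
  so \<open>\<parallel>A\<^sub>\<alpha>(S) - \<Pi>\<parallel>\<^sup>2 = \<parallel>A\<^sub>\<alpha>(S)\<parallel>\<^sup>2 - 1\<close>. Expanding the square, reversibility gives
  \<open>\<parallel>P\<parallel>\<^sup>2 = Tr(P\<^sup>2)\<close>, the Gibbs kernel of a two-block partition has \<open>\<parallel>G\<^sub>S\<parallel>\<^sup>2 = 2\<close>, and
  \<open>\<langle>P, G\<^sub>S\<rangle> = Q(S,S)/\<pi>(S) + Q(S',S')/\<pi>(S') = 2 - Q(S,S')/(\<pi>(S)\<pi>(S'))\<close> for the flow \<open>Q\<close>.
  Hence the objective is a decreasing affine function of the Cheeger ratio of \<open>S\<close>,
  so it is maximised exactly at the symmetrised Cheeger cuts.\<close>

definition frob_inner :: "('x::finite \<Rightarrow> real) \<Rightarrow> ('x \<Rightarrow> 'x \<Rightarrow> real) \<Rightarrow> ('x \<Rightarrow> 'x \<Rightarrow> real) \<Rightarrow> real" where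
  "frob_inner \<pi> M N = mat_trace (mat_mult (adjoint \<pi> M) N)"

definition flow :: "('x::finite \<Rightarrow> real) \<Rightarrow> ('x \<Rightarrow> 'x \<Rightarrow> real) \<Rightarrow> 'x set \<Rightarrow> 'x set \<Rightarrow> real" where
  "flow \<pi> P A B = (\<Sum>x\<in>A. \<Sum>y\<in>B. \<pi> x * P x y)"

lemma sum_UNIV_split_Compl:
  fixes f :: "'a::finite \<Rightarrow> 'b::comm_monoid_add"
  shows "sum f UNIV = sum f S + sum f (- S)"
  using sum.subset_diff[of S UNIV f] by (simp add: Compl_eq_Diff_UNIV add.commute)

lemma measure_of_Compl:
  assumes "prob_pos \<pi>"
  shows "measure_of \<pi> (- S) = 1 - measure_of \<pi> S"
  using assms sum_UNIV_split_Compl[of \<pi> S] by (simp add: prob_pos_def measure_of_def)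

lemma measure_of_pos_iff:
  fixes \<pi> :: "'x::finite \<Rightarrow> real"
  assumes "\<And>x. \<pi> x > 0"
  shows "0 < measure_of \<pi> S \<longleftrightarrow> S \<noteq> {}"
  using assms by (auto simp: measure_of_def intro: sum_pos)

lemma measure_of_proper_iff:
  assumes "prob_pos \<pi>"
  shows "0 < measure_of \<pi> S \<and> measure_of \<pi> S < 1 \<longleftrightarrow> S \<noteq> {} \<and> S \<noteq> UNIV"
proof -
  have pos: "\<And>x. \<pi> x > 0" using assms by (simp add: prob_pos_def)
  have "measure_of \<pi> S < 1 \<longleftrightarrow> 0 < measure_of \<pi> (- S)"
    using measure_of_Compl[OF assms] by simp
  then show ?thesis using measure_of_pos_iff[OF pos] by auto
qed

lemma frob_inner_eq_sum:
  "frob_inner \<pi> M N = (\<Sum>x\<in>UNIV. \<Sum>y\<in>UNIV. \<pi> x * M x y * N x y / \<pi> y)"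
  unfolding frob_inner_def mat_trace_def mat_mult_def adjoint_def
  by (subst sum.swap) (simp add: algebra_simps)

lemma frob_sq_eq_frob_inner: "frob_sq \<pi> M = frob_inner \<pi> M M"
  by (simp add: frob_sq_def frob_inner_def)

lemma frob_sq_lincomb:
  "frob_sq \<pi> (\<lambda>x y. a * M x y + b * N x y)
     = a\<^sup>2 * frob_sq \<pi> M + 2 * a * b * frob_inner \<pi> M N + b\<^sup>2 * frob_sq \<pi> N"
  unfolding frob_sq_eq_frob_inner frob_inner_eq_sum
  by (simp add: sum.distrib sum_distrib_left power2_eq_square algebra_simps add_divide_distrib)

lemma frob_sq_diff_Pi_mat:
  fixes \<pi> :: "'x::finite \<Rightarrow> real"
  assumes "prob_pos \<pi>" and rows: "\<And>x. (\<Sum>y\<in>UNIV. A x y) = 1"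
  shows "frob_sq \<pi> (\<lambda>x y. A x y - Pi_mat \<pi> x y) = frob_sq \<pi> A - 1"
proof -
  have pos: "\<And>y. \<pi> y > 0" and total: "(\<Sum>x\<in>UNIV. \<pi> x) = 1"
    using assms(1) by (auto simp: prob_pos_def)
  have pointwise: "\<pi> x * (A x y - \<pi> y) * (A x y - \<pi> y) / \<pi> y
      = \<pi> x * A x y * A x y / \<pi> y - 2 * (\<pi> x * A x y) + \<pi> x * \<pi> y" for x y
    using pos[of y] by (simp add: field_simps)
  show ?thesis
    unfolding frob_sq_eq_frob_inner frob_inner_eq_sum Pi_mat_def pointwise
    by (simp add: sum.distrib sum_subtractf sum_distrib_left[symmetric] rows total)
qed

lemma frob_sq_reversible:
  fixes \<pi> :: "'x::finite \<Rightarrow> real"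
  assumes "\<And>x. \<pi> x \<noteq> 0" and "reversible \<pi> P"
  shows "frob_sq \<pi> P = mat_trace (mat_mult P P)"
proof -
  have "\<pi> x * P x y * P x y / \<pi> y = P x y * P y x" for x y
    using assms by (simp add: reversible_def field_simps)
  then show ?thesis
    by (simp add: frob_sq_eq_frob_inner frob_inner_eq_sum mat_trace_def mat_mult_def)
qed

lemma sum_gibbs_kernel_block:
  assumes "measure_of \<pi> (Blk x) \<noteq> 0"
  shows "(\<Sum>y\<in>Blk x. gibbs_kernel \<pi> Blk x y) = 1"
  using assms by (simp add: gibbs_kernel_def measure_of_def sum_divide_distrib[symmetric])

lemma gibbs_kernel_row_sum:
  fixes \<pi> :: "'x::finite \<Rightarrow> real"
  assumes "measure_of \<pi> (Blk x) \<noteq> 0"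
  shows "(\<Sum>y\<in>UNIV. gibbs_kernel \<pi> Blk x y) = 1"
proof -
  have "(\<Sum>y\<in>UNIV. gibbs_kernel \<pi> Blk x y) = (\<Sum>y\<in>Blk x. gibbs_kernel \<pi> Blk x y)"
    by (rule sum.mono_neutral_right) (auto simp: gibbs_kernel_def)
  with sum_gibbs_kernel_block[of \<pi> Blk x] assms show ?thesis by simp
qed

lemma frob_inner_gibbs_kernel:
  fixes \<pi> :: "'x::finite \<Rightarrow> real"
  assumes "\<And>y. \<pi> y \<noteq> 0"
  shows "frob_inner \<pi> M (gibbs_kernel \<pi> Blk)
     = (\<Sum>x\<in>UNIV. \<pi> x * (\<Sum>y\<in>Blk x. M x y) / measure_of \<pi> (Blk x))"
proof -
  have "(\<Sum>y\<in>UNIV. \<pi> x * M x y * gibbs_kernel \<pi> Blk x y / \<pi> y)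
      = (\<Sum>y\<in>Blk x. \<pi> x * M x y / measure_of \<pi> (Blk x))" for x
    using assms by (subst sum.mono_neutral_right[of UNIV "Blk x"]) (auto simp: gibbs_kernel_def)
  then show ?thesis
    by (simp add: frob_inner_eq_sum sum_divide_distrib[symmetric] sum_distrib_left)
qed

lemma sum_cut_blocks:
  fixes f :: "'x::finite \<Rightarrow> 'x set \<Rightarrow> 'b::comm_monoid_add"
  shows "(\<Sum>x\<in>UNIV. f x (cut_blocks S x)) = (\<Sum>x\<in>S. f x S) + (\<Sum>x\<in>- S. f x (- S))"
  by (subst sum_UNIV_split_Compl[of _ S]) (simp add: cut_blocks_def)

lemma measure_of_cut_blocks_pos:
  fixes \<pi> :: "'x::finite \<Rightarrow> real"
  assumes "\<And>x. \<pi> x > 0" and "S \<noteq> {}" and "S \<noteq> UNIV"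
  shows "0 < measure_of \<pi> (cut_blocks S x)"
  using assms by (auto simp: cut_blocks_def measure_of_pos_iff)

lemma flow_swap_reversible:
  assumes "reversible \<pi> P"
  shows "flow \<pi> P A B = flow \<pi> P B A"
  using assms unfolding flow_def reversible_def by (subst sum.swap) simp

lemma flow_add_flow_Compl:
  fixes P :: "'x::finite \<Rightarrow> 'x \<Rightarrow> real"
  assumes "transition_matrix P"
  shows "flow \<pi> P A B + flow \<pi> P A (- B) = measure_of \<pi> A"
proof -
  have "(\<Sum>y\<in>B. \<pi> x * P x y) + (\<Sum>y\<in>- B. \<pi> x * P x y) = \<pi> x" for x
    using assms sum_UNIV_split_Compl[of "\<lambda>y. \<pi> x * P x y" B]
    by (simp add: transition_matrix_def sum_distrib_left[symmetric])
  then show ?thesis by (simp add: flow_def measure_of_def sum.distrib[symmetric])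
qed

lemma frob_sq_gibbs_kernel_cut:
  fixes \<pi> :: "'x::finite \<Rightarrow> real"
  assumes pos: "\<And>x. \<pi> x > 0" and "S \<noteq> {}" and "S \<noteq> UNIV"
  shows "frob_sq \<pi> (gibbs_kernel \<pi> (cut_blocks S)) = 2"
proof -
  have "frob_sq \<pi> (gibbs_kernel \<pi> (cut_blocks S))
      = (\<Sum>x\<in>UNIV. \<pi> x / measure_of \<pi> (cut_blocks S x))"
    using sum_gibbs_kernel_block[of \<pi> "cut_blocks S"] measure_of_cut_blocks_pos[of \<pi> S] assms
    by (simp add: frob_sq_eq_frob_inner frob_inner_gibbs_kernel less_imp_neq[symmetric])
  also have "\<dots> = measure_of \<pi> S / measure_of \<pi> S + measure_of \<pi> (- S) / measure_of \<pi> (- S)"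
    using sum_cut_blocks[of "\<lambda>x B. \<pi> x / measure_of \<pi> B" S]
    by (simp add: measure_of_def sum_divide_distrib[symmetric])
  also have "\<dots> = 2"
    using assms measure_of_pos_iff[of \<pi> S] measure_of_pos_iff[of \<pi> "- S"] by auto
  finally show ?thesis .
qed

lemma frob_inner_gibbs_kernel_cut:
  fixes \<pi> :: "'x::finite \<Rightarrow> real"
  assumes pi: "prob_pos \<pi>" and P: "transition_matrix P" "reversible \<pi> P"
    and S: "S \<noteq> {}" "S \<noteq> UNIV"
  shows "frob_inner \<pi> P (gibbs_kernel \<pi> (cut_blocks S)) = 2 - cheeger_ratio \<pi> P S"
proof -
  define p where "p = measure_of \<pi> S"
  define q where "q = measure_of \<pi> (- S)"
  define Q where "Q = flow \<pi> P S (- S)"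
  have pos: "\<And>x. \<pi> x > 0" using pi by (simp add: prob_pos_def)
  have "p > 0" "q > 0"
    using S measure_of_pos_iff[of \<pi> S] measure_of_pos_iff[of \<pi> "- S"] pos
    by (auto simp: p_def q_def)
  have "p + q = 1" using measure_of_Compl[OF pi, of S] by (simp add: p_def q_def)
  have "frob_inner \<pi> P (gibbs_kernel \<pi> (cut_blocks S))
      = (\<Sum>x\<in>UNIV. \<pi> x * (\<Sum>y\<in>cut_blocks S x. P x y) / measure_of \<pi> (cut_blocks S x))"
    using pos by (simp add: frob_inner_gibbs_kernel less_imp_neq[symmetric])
  also have "\<dots> = flow \<pi> P S S / p + flow \<pi> P (- S) (- S) / q"
    using sum_cut_blocks[of "\<lambda>x B. \<pi> x * (\<Sum>y\<in>B. P x y) / measure_of \<pi> B" S]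
    by (simp add: flow_def p_def q_def sum_divide_distrib[symmetric] sum_distrib_left)
  also have "\<dots> = (p - Q) / p + (q - Q) / q"
  proof -
    have "flow \<pi> P S S = p - Q"
      using flow_add_flow_Compl[OF P(1), of \<pi> S S] by (simp add: p_def Q_def)
    moreover have "flow \<pi> P (- S) (- S) = q - Q"
      using flow_add_flow_Compl[OF P(1), of \<pi> "- S" "- S"] flow_swap_reversible[OF P(2), of "- S" S]
      by (simp add: q_def Q_def)
    ultimately show ?thesis by simp
  qed
  also have "\<dots> = 2 - Q / (p * q)"
    using \<open>p > 0\<close> \<open>q > 0\<close> \<open>p + q = 1\<close> by (simp add: field_simps flip: distrib_left)
  also have "\<dots> = 2 - cheeger_ratio \<pi> P S"
    by (simp add: cheeger_ratio_def flow_def p_def q_def Q_def)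
  finally show ?thesis .
qed

lemma A_alpha_row_sum:
  fixes \<pi> :: "'x::finite \<Rightarrow> real"
  assumes "\<And>x. \<pi> x > 0" and "transition_matrix P" and "S \<noteq> {}" and "S \<noteq> UNIV"
  shows "(\<Sum>y\<in>UNIV. A_alpha \<alpha> \<pi> P S x y) = 1"
proof -
  have "(\<Sum>y\<in>UNIV. gibbs_kernel \<pi> (cut_blocks S) x y) = 1"
    using assms measure_of_cut_blocks_pos[of \<pi> S x] by (simp add: gibbs_kernel_row_sum)
  with \<open>transition_matrix P\<close> show ?thesis
    by (simp add: A_alpha_def sum.distrib transition_matrix_def flip: sum_distrib_left)
qed

lemma frob_sq_A_alpha_diff_Pi_mat:
  fixes \<pi> :: "'x::finite \<Rightarrow> real"
  assumes pi: "prob_pos \<pi>" and P: "transition_matrix P" "reversible \<pi> P"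
    and S: "S \<noteq> {}" "S \<noteq> UNIV"
  shows "frob_sq \<pi> (\<lambda>x y. A_alpha \<alpha> \<pi> P S x y - Pi_mat \<pi> x y)
    = \<alpha>\<^sup>2 * mat_trace (mat_mult P P) - 2 * \<alpha> * (1 - \<alpha>) * cheeger_ratio \<pi> P S + 1 - 2 * \<alpha>\<^sup>2"
proof -
  have pos: "\<And>x. \<pi> x > 0" using pi by (simp add: prob_pos_def)
  have "frob_sq \<pi> (\<lambda>x y. A_alpha \<alpha> \<pi> P S x y - Pi_mat \<pi> x y) = frob_sq \<pi> (A_alpha \<alpha> \<pi> P S) - 1"
    by (rule frob_sq_diff_Pi_mat[OF pi A_alpha_row_sum]) (use pos P(1) S in auto)
  also have "frob_sq \<pi> (A_alpha \<alpha> \<pi> P S)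
      = \<alpha>\<^sup>2 * frob_sq \<pi> P + 2 * \<alpha> * (1 - \<alpha>) * frob_inner \<pi> P (gibbs_kernel \<pi> (cut_blocks S))
        + (1 - \<alpha>)\<^sup>2 * frob_sq \<pi> (gibbs_kernel \<pi> (cut_blocks S))"
    unfolding A_alpha_def[abs_def] by (rule frob_sq_lincomb)
  also have "\<dots> = \<alpha>\<^sup>2 * mat_trace (mat_mult P P) + 2 * \<alpha> * (1 - \<alpha>) * (2 - cheeger_ratio \<pi> P S)
        + (1 - \<alpha>)\<^sup>2 * 2"
    using frob_sq_reversible[of \<pi> P] pos P(2) frob_inner_gibbs_kernel_cut[OF pi P S]
      frob_sq_gibbs_kernel_cut[of \<pi> S] S
    by (simp add: less_imp_neq[symmetric])
  finally show ?thesis by (simp add: power2_eq_square algebra_simps)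
qed

lemma sym_cheeger_eq_Min:
  assumes "prob_pos \<pi>"
  shows "sym_cheeger \<pi> P = Min (cheeger_ratio \<pi> P ` {S. S \<noteq> {} \<and> S \<noteq> UNIV})"
  unfolding sym_cheeger_def measure_of_proper_iff[OF assms]
  by (simp only: Setcompr_eq_image[symmetric]) auto

lemma sym_cheeger_cut_iff:
  assumes "prob_pos \<pi>"
  shows "sym_cheeger_cut \<pi> P S \<longleftrightarrow> S \<noteq> {} \<and> S \<noteq> UNIV \<and> cheeger_ratio \<pi> P S = sym_cheeger \<pi> P"
  using measure_of_proper_iff[OF assms] by (auto simp: sym_cheeger_cut_def)

lemma proper_subsets_nonempty:
  assumes "card (UNIV :: 'x::finite set) \<ge> 2"
  shows "{S :: 'x set. S \<noteq> {} \<and> S \<noteq> UNIV} \<noteq> {}"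
proof -
  obtain a :: 'x where True by blast
  have "{a} \<noteq> UNIV"
  proof
    assume "{a} = UNIV"
    then have "card (UNIV :: 'x set) = card {a}" by simp
    with assms show False by simp
  qed
  then show ?thesis by blast
qed

lemma Max_image_affine_antimono:
  fixes r :: "'a \<Rightarrow> real"
  assumes "finite A" and "A \<noteq> {}" and "0 \<le> c"
  shows "Max ((\<lambda>a. K - c * r a) ` A) = K - c * Min (r ` A)"
proof (rule Max_eqI)
  show "finite ((\<lambda>a. K - c * r a) ` A)" using assms(1) by simp
  show "y \<le> K - c * Min (r ` A)" if y_in: "y \<in> (\<lambda>a. K - c * r a) ` A" for y
  proof -
    obtain a where "a \<in> A" and y: "y = K - c * r a" using y_in by blast
    then have "Min (r ` A) \<le> r a" using assms(1) by simp
    then show ?thesis unfolding y using assms(3) by (simp add: mult_left_mono)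
  qed
  have "Min (r ` A) \<in> r ` A" using assms(1,2) by (intro Min_in) auto
  then obtain a where "a \<in> A" "r a = Min (r ` A)" by (auto simp: eq_commute)
  then show "K - c * Min (r ` A) \<in> (\<lambda>a. K - c * r a) ` A" by force
qed

theorem corollary4p6:
  fixes \<pi> :: "'x::finite \<Rightarrow> real" and P :: "'x \<Rightarrow> 'x \<Rightarrow> real" and \<alpha> :: real
  assumes "card (UNIV :: 'x set) \<ge> 2"
    and "prob_pos \<pi>"
    and "transition_matrix P"
    and "reversible \<pi> P"
    and "0 < \<alpha>" and "\<alpha> < 1"
  shows "(\<forall>S. sym_cheeger_cut \<pi> P S \<longrightarrow>
            (\<forall>T. T \<noteq> {} \<and> T \<noteq> UNIV \<longrightarrow>
               frob_sq \<pi> (\<lambda>x y. A_alpha \<alpha> \<pi> P T x y - Pi_mat \<pi> x y)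
                 \<le> frob_sq \<pi> (\<lambda>x y. A_alpha \<alpha> \<pi> P S x y - Pi_mat \<pi> x y)))
       \<and> Max {frob_sq \<pi> (\<lambda>x y. A_alpha \<alpha> \<pi> P S x y - Pi_mat \<pi> x y) | S. S \<noteq> {} \<and> S \<noteq> UNIV}
         = \<alpha>\<^sup>2 * mat_trace (mat_mult P P) - 2 * \<alpha> * (1 - \<alpha>) * sym_cheeger \<pi> P + 1 - 2 * \<alpha>\<^sup>2"
proof -
  let ?proper = "{S :: 'x set. S \<noteq> {} \<and> S \<noteq> UNIV}"
  let ?f = "\<lambda>S. frob_sq \<pi> (\<lambda>x y. A_alpha \<alpha> \<pi> P S x y - Pi_mat \<pi> x y)"
  define K where "K = \<alpha>\<^sup>2 * mat_trace (mat_mult P P) + 1 - 2 * \<alpha>\<^sup>2"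
  define c where "c = 2 * \<alpha> * (1 - \<alpha>)"
  have "c \<ge> 0" using assms(5,6) by (simp add: c_def)
  have f: "?f S = K - c * cheeger_ratio \<pi> P S" if "S \<in> ?proper" for S
    using frob_sq_A_alpha_diff_Pi_mat[OF assms(2-4)] that by (simp add: K_def c_def)
  have sym_cheeger_Min: "sym_cheeger \<pi> P = Min (cheeger_ratio \<pi> P ` ?proper)"
    by (rule sym_cheeger_eq_Min[OF assms(2)])
  have cut_max: "?f T \<le> ?f S" if "sym_cheeger_cut \<pi> P S" and "T \<in> ?proper" for S T
  proof -
    have "S \<in> ?proper" and "cheeger_ratio \<pi> P S \<le> cheeger_ratio \<pi> P T"
      using that sym_cheeger_cut_iff[OF assms(2)] by (auto simp: sym_cheeger_Min)
    then show ?thesis using f \<open>T \<in> ?proper\<close> \<open>c \<ge> 0\<close> by (simp add: mult_left_mono)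
  qed
  have "{?f S | S. S \<noteq> {} \<and> S \<noteq> UNIV} = ?f ` ?proper" by blast
  also have "\<dots> = (\<lambda>S. K - c * cheeger_ratio \<pi> P S) ` ?proper"
    by (rule image_cong) (simp_all add: f)
  finally have "Max {?f S | S. S \<noteq> {} \<and> S \<noteq> UNIV} = K - c * sym_cheeger \<pi> P"
    using Max_image_affine_antimono[OF _ proper_subsets_nonempty[OF assms(1)] \<open>c \<ge> 0\<close>]
    by (simp add: sym_cheeger_Min)
  with cut_max show ?thesis by (simp add: K_def c_def algebra_simps)
qed

end
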